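(* Let $d\ge1$ and let $\psi\in L^1(\mathbb R^d)\cap L^\infty(\mathbb R^d)$ be real-valued with $\widehat\psi(0)\ge0$, and let $a=\|\psi\|_{L^\infty}$, $b=\|\psi\|_{L^1}$, and $c>0$ be such that $c|\widehat\psi(\xi)|\ge1$ for all $\xi\in B^d_1$. Let $f\in PW_d\setminus\{0\}$ satisfy $\int_{\mathbb R^d}f\le0$, and set $T_\psi(f)=f*\psi$. Then $$|\{x\in\mathbb R^d: f(x)<0\}|\cdot|\{\xi\in\mathbb R^d: T_\psi(f)(\xi)<0\}|\ \ge\ (16a^2b^2c^4)^{-1}.$$ In particular, if there are $r_1,r_2>0$ with $f(x)\ge0$ for $|x|\ge r_1$ and $T_\psi(f)(\xi)\ge0$ for $|\xi|\ge r_2$, then $r_1r_2\ge(16a^2b^2c^4|B^d_1|^2)^{-1/d}$.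
   Context: $\widehat f(\xi)=\int_{\mathbb R^d}f(x)e^{-2\pi i\langle x,\xi\rangle}dx$. $B^d_1$ is the closed unit ball in $\mathbb R^d$ centered at $0$, $|E|$ denotes Lebesgue measure. $PW_d$ is the set of real-valued continuous $f\in L^1(\mathbb R^d)$ with $\operatorname{supp}\widehat f\subseteq B^d_1$. *)

theory Defs
  imports "HOL-Analysis.Analysis" "HOL-Probability.Essential_Supremum"
begin

definition fourier_transform :: "('a::euclidean_space \<Rightarrow> real) \<Rightarrow> 'a \<Rightarrow> complex" where
  "fourier_transform f \<xi> =
     (\<integral>x. complex_of_real (f x) * cis (- 2 * pi * (x \<bullet> \<xi>)) \<partial>lebesgue)"

definition convolution :: "('a::euclidean_space \<Rightarrow> real) \<Rightarrow> ('a \<Rightarrow> real) \<Rightarrow> 'a \<Rightarrow> real" where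
  "convolution f g x = (\<integral>y. f y * g (x - y) \<partial>lebesgue)"

definition PW :: "('a::euclidean_space \<Rightarrow> real) set" where
  "PW = {f. continuous_on UNIV f \<and> integrable lebesgue f \<and>
            closure {\<xi>. fourier_transform f \<xi> \<noteq> 0} \<subseteq> cball 0 1}"

definition Linf_norm :: "('a::euclidean_space \<Rightarrow> real) \<Rightarrow> ereal" where
  "Linf_norm f = esssup lebesgue (\<lambda>x. ereal \<bar>f x\<bar>)"

end

theory Submission
  imports Defs "HOL-Probability.Characteristic_Functions" "HOL-Real_Asymp.Real_Asymp"
begin

text \<open>
  Write \<open>g = f * \<psi>\<close>, \<open>A = {f < 0}\<close>, \<open>B = {g < 0}\<close>. As \<open>\<integral>f \<le> 0\<close> and
  \<open>\<integral>g = \<integral>f \<cdot> \<integral>\<psi> \<le> 0\<close>, at least half of the \<open>L\<^sup>1\<close> mass of \<open>f\<close> lies on \<open>A\<close>, so by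
  Cauchy--Schwarz \<open>\<parallel>f\<parallel>\<^sub>1\<^sup>2 \<le> 4 |A| \<parallel>f\<parallel>\<^sub>2\<^sup>2\<close>, and likewise \<open>\<parallel>g\<parallel>\<^sub>1\<^sup>2 \<le> 4 |B| \<parallel>g\<parallel>\<^sub>2\<^sup>2\<close>.
  By Plancherel, \<open>\<parallel>f\<parallel>\<^sub>2 = \<parallel>f\<^sup>\<and>\<parallel>\<^sub>2\<close> and \<open>\<parallel>g\<parallel>\<^sub>2 = \<parallel>f\<^sup>\<and> \<psi>\<^sup>\<and>\<parallel>\<^sub>2\<close>; since \<open>f\<^sup>\<and>\<close> lives on the unit ball,
  where \<open>c |\<psi>\<^sup>\<and>| \<ge> 1\<close>, this gives \<open>\<parallel>f\<parallel>\<^sub>2 \<le> c \<parallel>g\<parallel>\<^sub>2\<close>. Finally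
  \<open>\<parallel>g\<parallel>\<^sub>2\<^sup>2 \<le> \<parallel>g\<parallel>\<^sub>\<infinity> \<parallel>g\<parallel>\<^sub>1 \<le> a \<parallel>f\<parallel>\<^sub>1 \<parallel>g\<parallel>\<^sub>1\<close>, and multiplying everything out yields
  \<open>16 a\<^sup>2 c\<^sup>2 |A| |B| \<ge> 1\<close>; the stated constant follows from \<open>b c \<ge> c |\<psi>\<^sup>\<and>(0)| \<ge> 1\<close>.
  If \<open>A\<close> and \<open>B\<close> lie in balls of radii \<open>r\<^sub>1\<close>, \<open>r\<^sub>2\<close>, then \<open>|A| |B| \<le> |B\<^sub>1|\<^sup>2 (r\<^sub>1 r\<^sub>2)\<^sup>d\<close>.

  Fourier inversion (for \<open>f\<close>, and hence for \<open>g\<close>) is obtained by Gaussian summability, using the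
  Fourier transform of the Gaussian from the characteristic function of the normal distribution;
  Plancherel then follows from inversion by Fubini.
\<close>

lemma measurable_cis [measurable]:
  "f \<in> borel_measurable M \<Longrightarrow> (\<lambda>x. cis (f x)) \<in> borel_measurable M"
  unfolding cis_conv_exp by measurable

lemma cis_sum: "finite I \<Longrightarrow> cis (sum f I) = (\<Prod>i\<in>I. cis (f i))"
  by (induction I rule: finite_induct) (auto simp: cis_mult[symmetric])

lemma norm_power2_eq_sum_Basis: "(norm (x::'a::euclidean_space))\<^sup>2 = (\<Sum>b\<in>Basis. (x \<bullet> b)\<^sup>2)"
  unfolding power2_norm_eq_inner by (subst euclidean_inner) (simp add: power2_eq_square)

lemma lborel_distr_translate: "distr lborel borel (\<lambda>y. y - t) = (lborel :: 'a::euclidean_space measure)"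
proof -
  have "(\<lambda>y. y - t) = (+) (- t)" by (simp add: fun_eq_iff)
  then show ?thesis by (simp add: lborel_distr_plus)
qed

lemma lborel_distr_reflect: "distr lborel borel (\<lambda>y. t - y) = (lborel :: 'a::euclidean_space measure)"
  using lborel_affine[of "-1" t] by (simp add: density_1)

lemma lborel_integral_translate:
  fixes h :: "'a::euclidean_space \<Rightarrow> 'b::{banach, second_countable_topology}"
  assumes [measurable]: "h \<in> borel_measurable borel"
  shows "(\<integral>y. h (y - t) \<partial>lborel) = integral\<^sup>L lborel h"
    and "integrable lborel (\<lambda>y. h (y - t)) \<longleftrightarrow> integrable lborel h"
  by (subst (2) lborel_distr_translate[symmetric, of t], subst integral_distr integrable_distr_eq; simp)+

lemma lborel_integral_reflect:
  fixes h :: "'a::euclidean_space \<Rightarrow> 'b::{banach, second_countable_topology}"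
  assumes [measurable]: "h \<in> borel_measurable borel"
  shows "(\<integral>y. h (t - y) \<partial>lborel) = integral\<^sup>L lborel h"
    and "integrable lborel (\<lambda>y. h (t - y)) \<longleftrightarrow> integrable lborel h"
  by (subst (2) lborel_distr_reflect[symmetric, of t], subst integral_distr integrable_distr_eq; simp)+

lemma AE_lborel_reflect:
  fixes x :: "'a::euclidean_space"
  assumes "AE z in lborel. P z"
  shows "AE y in lborel. P (x - y)"
proof -
  obtain N where N: "N \<in> null_sets lborel" "{z \<in> space lborel. \<not> P z} \<subseteq> N"
    using assms unfolding eventually_ae_filter by auto
  then have "N \<in> null_sets (distr lborel borel (\<lambda>y. x - y))"
    by (simp add: lborel_distr_reflect)
  then have "(\<lambda>y. x - y) -` N \<in> null_sets lborel"
    by (subst (asm) null_sets_distr_iff) auto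
  then show ?thesis
    by (rule AE_I') (use N(2) in auto)
qed

lemma integrable_pair_lborel_bound:
  fixes h :: "('a::euclidean_space \<times> 'b::euclidean_space) \<Rightarrow> 'c::{banach, second_countable_topology}"
  assumes [measurable]: "h \<in> borel_measurable (lborel \<Otimes>\<^sub>M lborel)"
    and p: "integrable lborel p" and q: "integrable lborel q"
    and bound: "\<And>x y. norm (h (x, y)) \<le> p x * q y"
  shows "integrable (lborel \<Otimes>\<^sub>M lborel) h"
proof (rule Bochner_Integration.integrable_bound)
  have [measurable]: "p \<in> borel_measurable borel" "q \<in> borel_measurable borel"
    using p q by (simp_all add: borel_measurable_integrable)
  show "integrable (lborel \<Otimes>\<^sub>M lborel) (\<lambda>(x, y). p x * q y)"
  proof (rule lborel_pair.Fubini_integrable)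
    have "integrable lborel (\<lambda>x. \<bar>p x\<bar> * (\<integral>y. \<bar>q y\<bar> \<partial>lborel))"
      using p by (intro integrable_mult_left) simp
    then show "integrable lborel (\<lambda>x. \<integral>y. norm (case (x, y) of (x, y) \<Rightarrow> p x * q y) \<partial>lborel)"
      by (simp add: abs_mult)
  qed (use q in simp_all)
  show "AE z in lborel \<Otimes>\<^sub>M lborel. norm (h z) \<le> norm (case z of (x, y) \<Rightarrow> p x * q y)"
    using bound by (auto split: prod.split intro: order_trans[OF _ abs_ge_self])
qed simp

section \<open>The Gaussian and its Fourier transform\<close>

lemma fourier_gaussian_real:
  fixes s w :: real
  assumes s: "s > 0"
  shows "integrable lborel (\<lambda>y. complex_of_real (exp (- pi * s * y\<^sup>2)) * cis (- 2 * pi * w * y))"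
    and "(\<integral>y. complex_of_real (exp (- pi * s * y\<^sup>2)) * cis (- 2 * pi * w * y) \<partial>lborel)
           = complex_of_real (exp (- pi * w\<^sup>2 / s) / sqrt s)"
proof -
  define k where "k = sqrt (2 * pi * s)"
  have k: "k > 0" "k\<^sup>2 = 2 * pi * s"
    using s by (simp_all add: k_def)
  define t where "t = - 2 * pi * w / k"
  define h where "h = (\<lambda>x. complex_of_real (std_normal_density x) * iexp (t * x))"
  have h_char: "integrable lborel h \<and> integral\<^sup>L lborel h = complex_of_real (exp (- (t\<^sup>2) / 2))"
  proof -
    interpret real_distribution std_normal_distribution
      by (rule real_dist_normal_dist)
    have "integrable std_normal_distribution (\<lambda>x. iexp (t * x))"
      by (rule integrable_iexp) auto
    moreover have "char std_normal_distribution t = complex_of_real (exp (- (t\<^sup>2) / 2))"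
      by (simp add: char_std_normal_distribution)
    ultimately show ?thesis
      unfolding char_def h_def by (simp add: integrable_density integral_density scaleR_conv_of_real)
  qed
  have rescale: "(\<lambda>y. complex_of_real (sqrt (2 * pi)) * h (0 + k * y))
      = (\<lambda>y. complex_of_real (exp (- pi * s * y\<^sup>2)) * cis (- 2 * pi * w * y))"
  proof
    fix y
    have "- (k * y)\<^sup>2 / 2 = - pi * s * y\<^sup>2" "t * (k * y) = - 2 * pi * w * y"
      using k by (simp_all add: t_def power_mult_distrib)
    then show "complex_of_real (sqrt (2 * pi)) * h (0 + k * y)
        = complex_of_real (exp (- pi * s * y\<^sup>2)) * cis (- 2 * pi * w * y)"
      unfolding h_def std_normal_density_def by (simp add: cis_conv_exp mult.commute)
  qed
  show "integrable lborel (\<lambda>y. complex_of_real (exp (- pi * s * y\<^sup>2)) * cis (- 2 * pi * w * y))"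
    unfolding rescale[symmetric] using lborel_integrable_real_affine[of h k 0] h_char k by simp
  have "integral\<^sup>L lborel h = k *\<^sub>R (\<integral>y. h (0 + k * y) \<partial>lborel)"
    using lborel_integral_real_affine[of k h 0] k by simp
  moreover have "t\<^sup>2 / 2 = pi * w\<^sup>2 / s" "k / sqrt (2 * pi) = sqrt s"
    using k s by (simp_all add: t_def k_def field_simps real_sqrt_mult power2_eq_square)
  ultimately show "(\<integral>y. complex_of_real (exp (- pi * s * y\<^sup>2)) * cis (- 2 * pi * w * y) \<partial>lborel)
      = complex_of_real (exp (- pi * w\<^sup>2 / s) / sqrt s)"
    unfolding rescale[symmetric] using h_char k s
    by (simp add: scaleR_conv_of_real field_simps)
qed

text \<open>The inverse Fourier transform of \<open>\<xi> \<mapsto> exp (- pi * s * (norm \<xi>)\<^sup>2)\<close>: a probability density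
  concentrating at \<open>0\<close> as \<open>s \<rightarrow> 0\<close>.\<close>
definition gauss_kernel :: "real \<Rightarrow> 'a::euclidean_space \<Rightarrow> real" where
  "gauss_kernel s z = (1 / sqrt s) ^ DIM('a) * exp (- pi * (norm z)\<^sup>2 / s)"

lemma gauss_kernel_nonneg: "s > 0 \<Longrightarrow> gauss_kernel s z \<ge> 0"
  by (simp add: gauss_kernel_def)

lemma gauss_kernel_measurable [measurable]: "gauss_kernel s \<in> borel_measurable borel"
  unfolding gauss_kernel_def by measurable

lemma fourier_gaussian:
  fixes z :: "'a::euclidean_space"
  assumes s: "s > 0"
  shows "integrable lborel (\<lambda>\<xi>::'a. complex_of_real (exp (- pi * s * (norm \<xi>)\<^sup>2)) * cis (- 2 * pi * (z \<bullet> \<xi>)))"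
    and "(\<integral>\<xi>. complex_of_real (exp (- pi * s * (norm \<xi>)\<^sup>2)) * cis (- 2 * pi * (z \<bullet> \<xi>)) \<partial>lborel)
           = complex_of_real (gauss_kernel s z)"
proof -
  interpret P: product_sigma_finite "\<lambda>_::'a. lborel :: real measure"
    by (simp add: product_sigma_finite_def sigma_finite_lborel)
  define g where "g = (\<lambda>b y. complex_of_real (exp (- pi * s * y\<^sup>2)) * cis (- 2 * pi * (z \<bullet> b) * y))"
  define G where "G = (\<lambda>\<xi>::'a. complex_of_real (exp (- pi * s * (norm \<xi>)\<^sup>2)) * cis (- 2 * pi * (z \<bullet> \<xi>)))"
  define T where "T = (\<lambda>f. \<Sum>b\<in>(Basis::'a set). f b *\<^sub>R b)"
  text \<open>In coordinates the Gaussian factorises into one-dimensional ones.\<close>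
  have GT: "G (T f) = (\<Prod>b\<in>Basis. g b (f b))" for f
  proof -
    have "(norm (T f))\<^sup>2 = (\<Sum>b\<in>Basis. (f b)\<^sup>2)" "z \<bullet> T f = (\<Sum>b\<in>Basis. (z \<bullet> b) * f b)"
      unfolding norm_power2_eq_sum_Basis T_def by (simp_all add: inner_sum_right mult.commute)
    then show ?thesis
      unfolding G_def g_def
      by (simp add: sum_distrib_left exp_sum cis_sum prod.distrib mult.assoc)
  qed
  have g: "\<And>b. integrable lborel (g b)"
    unfolding g_def using fourier_gaussian_real(1)[OF s] by simp
  have [measurable]: "G \<in> borel_measurable borel" "T \<in> measurable (Pi\<^sub>M Basis (\<lambda>_. lborel)) borel"
    unfolding G_def T_def by measurable
  have lborel_T: "lborel = distr (Pi\<^sub>M Basis (\<lambda>_. lborel)) borel T"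
    unfolding lborel_eq[where 'a='a] T_def ..
  have "integrable (Pi\<^sub>M Basis (\<lambda>_. lborel)) (\<lambda>f. \<Prod>b\<in>Basis. g b (f b))"
    by (rule P.product_integrable_prod) (auto intro: g)
  then show "integrable lborel (\<lambda>\<xi>::'a. complex_of_real (exp (- pi * s * (norm \<xi>)\<^sup>2)) * cis (- 2 * pi * (z \<bullet> \<xi>)))"
    unfolding G_def[symmetric] lborel_T by (subst integrable_distr_eq) (simp_all add: GT)
  have "integral\<^sup>L lborel G = (\<integral>f. (\<Prod>b\<in>Basis. g b (f b)) \<partial>Pi\<^sub>M Basis (\<lambda>_. lborel))"
    unfolding lborel_T by (subst integral_distr) (simp_all add: GT)
  also have "\<dots> = (\<Prod>b\<in>Basis. integral\<^sup>L lborel (g b))"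
    by (rule P.product_integral_prod) (auto intro: g)
  also have "\<dots> = (\<Prod>b\<in>(Basis::'a set). complex_of_real (exp (- pi * (z \<bullet> b)\<^sup>2 / s) / sqrt s))"
    unfolding g_def using fourier_gaussian_real(2)[OF s] by simp
  also have "\<dots> = complex_of_real (gauss_kernel s z)"
    unfolding gauss_kernel_def norm_power2_eq_sum_Basis of_real_prod[symmetric]
    by (simp add: prod.distrib divide_inverse power_one_over exp_sum sum_distrib_left
        sum_divide_distrib mult.commute)
  finally show "(\<integral>\<xi>. complex_of_real (exp (- pi * s * (norm \<xi>)\<^sup>2)) * cis (- 2 * pi * (z \<bullet> \<xi>)) \<partial>lborel)
      = complex_of_real (gauss_kernel s z)"
    unfolding G_def .
qed

lemma gauss_kernel_integral:
  assumes s: "s > 0"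
  shows "integrable lborel (\<lambda>y. gauss_kernel s (y - x :: 'a::euclidean_space))"
    and "(\<integral>y. gauss_kernel s (y - x :: 'a) \<partial>lborel) = 1"
proof -
  have s': "1 / s > 0" using s by simp
  have "integrable lborel (\<lambda>\<xi>::'a. exp (- pi * (norm \<xi>)\<^sup>2 / s))"
    using fourier_gaussian(1)[OF s', of 0] by (simp add: complex_of_real_integrable_eq)
  then have int: "integrable lborel (gauss_kernel s :: 'a \<Rightarrow> real)"
    unfolding gauss_kernel_def by simp
  have "complex_of_real (\<integral>\<xi>. exp (- pi * (norm \<xi>)\<^sup>2 / s) \<partial>(lborel :: 'a measure))
      = complex_of_real (sqrt s ^ DIM('a))"
    using fourier_gaussian(2)[OF s', of 0] by (simp add: gauss_kernel_def real_sqrt_divide)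
  then have "integral\<^sup>L lborel (gauss_kernel s :: 'a \<Rightarrow> real) = 1"
    using s unfolding gauss_kernel_def of_real_eq_iff by (simp add: power_mult_distrib[symmetric])
  with int show "integrable lborel (\<lambda>y. gauss_kernel s (y - x :: 'a))"
    and "(\<integral>y. gauss_kernel s (y - x :: 'a) \<partial>lborel) = 1"
    by (simp_all add: lborel_integral_translate)
qed

lemma gauss_kernel_tail:
  assumes s: "s > 0" and z: "norm z \<ge> \<delta>" and \<delta>: "\<delta> \<ge> 0"
  shows "gauss_kernel s (z::'a::euclidean_space) \<le> (1 / sqrt s) ^ DIM('a) * exp (- pi * \<delta>\<^sup>2 / s)"
    and "gauss_kernel s z \<le> sqrt 2 ^ DIM('a) * exp (- pi * \<delta>\<^sup>2 / (2 * s)) * gauss_kernel (2 * s) z"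
proof -
  have "\<delta>\<^sup>2 \<le> (norm z)\<^sup>2" using z \<delta> by (simp add: power_mono)
  then have exp1: "exp (- pi * (norm z)\<^sup>2 / s) \<le> exp (- pi * \<delta>\<^sup>2 / s)"
    and exp2: "exp (- pi * (norm z)\<^sup>2 / s) \<le> exp (- pi * \<delta>\<^sup>2 / (2 * s)) * exp (- pi * (norm z)\<^sup>2 / (2 * s))"
    using s by (simp_all add: divide_right_mono field_simps exp_add[symmetric])
  show "gauss_kernel s z \<le> (1 / sqrt s) ^ DIM('a) * exp (- pi * \<delta>\<^sup>2 / s)"
    unfolding gauss_kernel_def using s exp1 by (simp add: mult_left_mono)
  have "sqrt 2 ^ DIM('a) * (1 / sqrt (2 * s)) ^ DIM('a) = (1 / sqrt s) ^ DIM('a)"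
    using s by (simp add: power_mult_distrib[symmetric] real_sqrt_mult)
  have "gauss_kernel s z \<le> (1 / sqrt s) ^ DIM('a) *
      (exp (- pi * \<delta>\<^sup>2 / (2 * s)) * exp (- pi * (norm z)\<^sup>2 / (2 * s)))"
    unfolding gauss_kernel_def using s exp2 by (simp add: mult_left_mono)
  also have "\<dots> = sqrt 2 ^ DIM('a) * exp (- pi * \<delta>\<^sup>2 / (2 * s)) * gauss_kernel (2 * s) z"
    unfolding gauss_kernel_def \<open>sqrt 2 ^ DIM('a) * _ = _\<close>[symmetric] by (simp only: mult_ac)
  finally show "gauss_kernel s z \<le> sqrt 2 ^ DIM('a) * exp (- pi * \<delta>\<^sup>2 / (2 * s)) * gauss_kernel (2 * s) z" .
qed

lemma gauss_kernel_approx_bound: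
  fixes u :: "'a::euclidean_space \<Rightarrow> real"
  assumes [measurable]: "u \<in> borel_measurable borel" and u: "integrable lborel u"
    and s: "s > 0" and \<delta>: "\<delta> > 0" and \<epsilon>: "\<epsilon> > 0"
    and cont: "\<And>y. dist y x < \<delta> \<Longrightarrow> \<bar>u y - u x\<bar> < \<epsilon>"
  shows "\<bar>(\<integral>y. u y * gauss_kernel s (y - x) \<partial>lborel) - u x\<bar> \<le>
     \<epsilon> + (1 / sqrt s) ^ DIM('a) * exp (- pi * \<delta>\<^sup>2 / s) * (\<integral>y. \<bar>u y\<bar> \<partial>lborel)
       + \<bar>u x\<bar> * (sqrt 2 ^ DIM('a) * exp (- pi * \<delta>\<^sup>2 / (2 * s)))"
proof -
  define M where "M = (1 / sqrt s) ^ DIM('a) * exp (- pi * \<delta>\<^sup>2 / s)"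
  define E where "E = sqrt 2 ^ DIM('a) * exp (- pi * \<delta>\<^sup>2 / (2 * s))"
  have s2: "2 * s > 0" using s by simp
  note K = gauss_kernel_integral[OF s, of x] and K2 = gauss_kernel_integral[OF s2, of x]
  have K_nonneg: "gauss_kernel s (y - x) \<ge> 0" "gauss_kernel (2 * s) (y - x) \<ge> 0" for y
    using gauss_kernel_nonneg[OF s] gauss_kernel_nonneg[OF s2] by auto
  have "integrable lborel (\<lambda>y. u y * gauss_kernel s (y - x))"
  proof (rule Bochner_Integration.integrable_bound[of _ "\<lambda>y. (1 / sqrt s) ^ DIM('a) * u y"])
    show "AE y in lborel. norm (u y * gauss_kernel s (y - x)) \<le> norm ((1 / sqrt s) ^ DIM('a) * u y)"
      using K_nonneg s unfolding gauss_kernel_def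
      by (auto simp: abs_mult mult.commute intro!: mult_left_mono mult_left_le)
  qed (use u in \<open>simp_all\<close>)
  then have diff: "(\<integral>y. u y * gauss_kernel s (y - x) \<partial>lborel) - u x
      = (\<integral>y. (u y - u x) * gauss_kernel s (y - x) \<partial>lborel)"
    and diff_int: "integrable lborel (\<lambda>y. (u y - u x) * gauss_kernel s (y - x))"
    using K by (simp_all add: left_diff_distrib)
  define R where "R = (\<lambda>y. \<epsilon> * gauss_kernel s (y - x) + M * \<bar>u y\<bar> + \<bar>u x\<bar> * E * gauss_kernel (2 * s) (y - x))"
  text \<open>Near \<open>x\<close> continuity is used, away from \<open>x\<close> the Gaussian tail bounds.\<close>
  have pointwise: "\<bar>(u y - u x) * gauss_kernel s (y - x)\<bar> \<le> R y" for y
  proof (cases "dist y x < \<delta>")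
    case True
    then show ?thesis
      using cont[OF True] K_nonneg \<epsilon> s unfolding R_def M_def E_def
      by (auto simp: abs_mult intro!: add_increasing2 mult_right_mono)
  next
    case False
    then have "norm (y - x) \<ge> \<delta>" by (simp add: dist_norm)
    note tail = gauss_kernel_tail[OF s this, folded M_def E_def]
    have "\<bar>u y - u x\<bar> * gauss_kernel s (y - x) \<le> \<bar>u y\<bar> * gauss_kernel s (y - x) + \<bar>u x\<bar> * gauss_kernel s (y - x)"
      using K_nonneg by (simp add: distrib_right[symmetric] mult_right_mono abs_triangle_ineq4)
    also have "\<dots> \<le> \<bar>u y\<bar> * M + \<bar>u x\<bar> * (E * gauss_kernel (2 * s) (y - x))"
      using tail \<delta> by (intro add_mono mult_left_mono) auto
    finally have "\<bar>(u y - u x) * gauss_kernel s (y - x)\<bar>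
        \<le> M * \<bar>u y\<bar> + \<bar>u x\<bar> * E * gauss_kernel (2 * s) (y - x)"
      using K_nonneg by (simp add: abs_mult mult_ac)
    moreover have "\<epsilon> * gauss_kernel s (y - x) \<ge> 0"
      using K_nonneg \<epsilon> by simp
    ultimately show ?thesis
      unfolding R_def by linarith
  qed
  have "\<bar>(\<integral>y. u y * gauss_kernel s (y - x) \<partial>lborel) - u x\<bar> \<le> integral\<^sup>L lborel R"
    unfolding diff by (rule integral_abs_bound_integral[OF diff_int _ pointwise]) (use K K2 u in \<open>simp add: R_def\<close>)
  also have "integral\<^sup>L lborel R = \<epsilon> + M * (\<integral>y. \<bar>u y\<bar> \<partial>lborel) + \<bar>u x\<bar> * E"
    unfolding R_def using K K2 u by simp
  finally show ?thesis unfolding M_def E_def by simp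
qed

lemma gauss_kernel_approx_identity:
  fixes u :: "'a::euclidean_space \<Rightarrow> real"
  assumes cont: "continuous_on UNIV u" and u: "integrable lborel u"
  shows "((\<lambda>s. \<integral>y. u y * gauss_kernel s (y - x) \<partial>lborel) \<longlongrightarrow> u x) (at_right 0)"
proof (rule tendstoI)
  fix r :: real assume r: "r > 0"
  have [measurable]: "u \<in> borel_measurable borel"
    using cont by (rule borel_measurable_continuous_onI)
  obtain \<delta> where \<delta>: "\<delta> > 0" and near: "\<And>y. dist y x < \<delta> \<Longrightarrow> \<bar>u y - u x\<bar> < r / 2"
    using cont half_gt_zero[OF r] unfolding continuous_on_iff dist_real_def by blast
  have "((\<lambda>s. (1 / sqrt s) ^ DIM('a) * exp (- pi * \<delta>\<^sup>2 / s)) \<longlongrightarrow> 0) (at_right 0)"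
    and "((\<lambda>s. exp (- pi * \<delta>\<^sup>2 / (2 * s))) \<longlongrightarrow> 0) (at_right 0)"
    using \<delta> by real_asymp+
  then have "((\<lambda>s. (1 / sqrt s) ^ DIM('a) * exp (- pi * \<delta>\<^sup>2 / s) * (\<integral>y. \<bar>u y\<bar> \<partial>lborel)
       + \<bar>u x\<bar> * (sqrt 2 ^ DIM('a) * exp (- pi * \<delta>\<^sup>2 / (2 * s)))) \<longlongrightarrow> 0) (at_right 0)"
    by (auto intro!: tendsto_add_zero tendsto_mult_left_zero tendsto_mult_right_zero)
  then have "\<forall>\<^sub>F s in at_right 0. (1 / sqrt s) ^ DIM('a) * exp (- pi * \<delta>\<^sup>2 / s) * (\<integral>y. \<bar>u y\<bar> \<partial>lborel)
       + \<bar>u x\<bar> * (sqrt 2 ^ DIM('a) * exp (- pi * \<delta>\<^sup>2 / (2 * s))) < r / 2"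
    using r by (intro order_tendstoD(2)) auto
  moreover have "\<forall>\<^sub>F s in at_right 0. (0::real) < s"
    by (rule eventually_at_right_less)
  ultimately show "\<forall>\<^sub>F s in at_right 0. dist (\<integral>y. u y * gauss_kernel s (y - x) \<partial>lborel) (u x) < r"
  proof eventually_elim
    case (elim s)
    then show ?case
      using gauss_kernel_approx_bound[OF _ u elim(2) \<delta> half_gt_zero[OF r] near]
      by (simp add: dist_real_def)
  qed
qed

section \<open>Fourier inversion and Plancherel\<close>

text \<open>
  The Fourier transform of \<open>Defs\<close>, but integrated against \<open>lborel\<close> instead of its completion
  \<open>lebesgue\<close>, so that Fubini and the measurability prover apply; the two agree on Borel functions
  (\<open>fourier_transform_eq_fourier\<close>). The same goes for \<open>conv\<close> below.
\<close>

definition fourier :: "('a::euclidean_space \<Rightarrow> real) \<Rightarrow> 'a \<Rightarrow> complex" where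
  "fourier u \<xi> = (\<integral>x. complex_of_real (u x) * cis (- 2 * pi * (x \<bullet> \<xi>)) \<partial>lborel)"

definition inverse_fourier :: "('a::euclidean_space \<Rightarrow> complex) \<Rightarrow> 'a \<Rightarrow> complex" where
  "inverse_fourier G x = (\<integral>\<xi>. G \<xi> * cis (2 * pi * (x \<bullet> \<xi>)) \<partial>lborel)"

lemma fourier_measurable [measurable]:
  assumes [measurable]: "u \<in> borel_measurable borel"
  shows "fourier u \<in> borel_measurable borel"
  unfolding fourier_def by measurable

lemma norm_fourier_le: "norm (fourier u \<xi>) \<le> (\<integral>x. \<bar>u x\<bar> \<partial>lborel)"
proof -
  have "norm (fourier u \<xi>) \<le> (\<integral>x. norm (complex_of_real (u x) * cis (- 2 * pi * (x \<bullet> \<xi>))) \<partial>lborel)"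
    unfolding fourier_def by (rule integral_norm_bound)
  then show ?thesis by (simp add: norm_mult)
qed

lemma fourier_0: "fourier u 0 = complex_of_real (integral\<^sup>L lborel u)"
  by (simp add: fourier_def)

lemma cnj_fourier: "cnj (fourier u \<xi>) = (\<integral>x. complex_of_real (u x) * cis (2 * pi * (x \<bullet> \<xi>)) \<partial>lborel)"
  unfolding fourier_def Bochner_Integration.integral_cnj[symmetric] by (simp add: cis_cnj)

lemma fourier_eq_0_if_integral_abs_eq_0:
  fixes u :: "'a::euclidean_space \<Rightarrow> real"
  assumes [measurable]: "u \<in> borel_measurable borel" and "integrable lborel u"
    and "(\<integral>x. \<bar>u x\<bar> \<partial>lborel) = 0"
  shows "fourier u \<xi> = 0"
proof -
  have "AE x in lborel. u x = 0"
    using assms by (subst (asm) integral_nonneg_eq_0_iff_AE) auto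
  then show ?thesis
    unfolding fourier_def by (auto intro: integral_eq_zero_AE)
qed

lemma inverse_fourier_gauss_damped:
  fixes u :: "'a::euclidean_space \<Rightarrow> real"
  assumes [measurable]: "u \<in> borel_measurable borel" and u: "integrable lborel u" and s: "s > 0"
  shows "inverse_fourier (\<lambda>\<xi>. fourier u \<xi> * complex_of_real (exp (- pi * s * (norm \<xi>)\<^sup>2))) x
       = complex_of_real (\<integral>y. u y * gauss_kernel s (y - x) \<partial>lborel)"
proof -
  define f where "f = (\<lambda>(\<xi>::'a) (y::'a). complex_of_real (u y) * cis (- 2 * pi * (y \<bullet> \<xi>)) *
    (complex_of_real (exp (- pi * s * (norm \<xi>)\<^sup>2)) * cis (2 * pi * (x \<bullet> \<xi>))))"
  have "integrable (lborel \<Otimes>\<^sub>M lborel) (case_prod f)"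
    by (rule integrable_pair_lborel_bound[where p="\<lambda>\<xi>. exp (- pi * s * (norm \<xi>)\<^sup>2)" and q="\<lambda>y. \<bar>u y\<bar>"])
      (use u fourier_gaussian(1)[OF s, of 0] in \<open>auto simp: f_def norm_mult complex_of_real_integrable_eq\<close>)
  then have "inverse_fourier (\<lambda>\<xi>. fourier u \<xi> * complex_of_real (exp (- pi * s * (norm \<xi>)\<^sup>2))) x
      = (\<integral>y. (\<integral>\<xi>. f \<xi> y \<partial>lborel) \<partial>lborel)"
    unfolding inverse_fourier_def
    by (simp only: lborel_pair.Fubini_integral fourier_def f_def integral_mult_left_zero[symmetric] mult.assoc)
  also have "\<dots> = (\<integral>y. complex_of_real (u y * gauss_kernel s (y - x)) \<partial>lborel)"
  proof (rule Bochner_Integration.integral_cong[OF refl])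
    fix y :: 'a
    have "cis (- 2 * pi * ((y - x) \<bullet> \<xi>)) = cis (- 2 * pi * (y \<bullet> \<xi>)) * cis (2 * pi * (x \<bullet> \<xi>))" for \<xi>
      by (simp add: cis_mult algebra_simps)
    then have "f \<xi> y = complex_of_real (u y) *
        (complex_of_real (exp (- pi * s * (norm \<xi>)\<^sup>2)) * cis (- 2 * pi * ((y - x) \<bullet> \<xi>)))" for \<xi>
      unfolding f_def by (simp only: mult_ac)
    then show "(\<integral>\<xi>. f \<xi> y \<partial>lborel) = complex_of_real (u y * gauss_kernel s (y - x))"
      using fourier_gaussian(2)[OF s, of "y - x"] by simp
  qed
  finally show ?thesis by (simp only: integral_complex_of_real)
qed

theorem fourier_inversion:
  fixes u :: "'a::euclidean_space \<Rightarrow> real"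
  assumes cont: "continuous_on UNIV u" and u: "integrable lborel u" and Fu: "integrable lborel (fourier u)"
  shows "complex_of_real (u x) = inverse_fourier (fourier u) x"
proof (rule LIMSEQ_unique)
  have [measurable]: "u \<in> borel_measurable borel"
    using cont by (rule borel_measurable_continuous_onI)
  define L where "L = (\<lambda>n. inverse_fourier
    (\<lambda>\<xi>. fourier u \<xi> * complex_of_real (exp (- pi * (1 / real (Suc n)) * (norm \<xi>)\<^sup>2))) x)"
  have "filterlim (\<lambda>n. 1 / real (Suc n)) (at_right 0) sequentially"
    by real_asymp
  then have "(\<lambda>n. \<integral>y. u y * gauss_kernel (1 / real (Suc n)) (y - x) \<partial>lborel) \<longlonglongrightarrow> u x"
    by (rule filterlim_compose[OF gauss_kernel_approx_identity[OF cont u]])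
  moreover have "L = (\<lambda>n. complex_of_real (\<integral>y. u y * gauss_kernel (1 / real (Suc n)) (y - x) \<partial>lborel))"
    unfolding L_def by (intro ext inverse_fourier_gauss_damped) (simp_all add: u)
  ultimately show "L \<longlonglongrightarrow> complex_of_real (u x)"
    by (simp add: tendsto_of_real)
  show "L \<longlonglongrightarrow> inverse_fourier (fourier u) x"
    unfolding L_def inverse_fourier_def
  proof (rule integral_dominated_convergence[where w="\<lambda>\<xi>. norm (fourier u \<xi>)"])
    show "AE \<xi> in lborel. (\<lambda>n. fourier u \<xi> * complex_of_real (exp (- pi * (1 / real (Suc n)) * (norm \<xi>)\<^sup>2))
        * cis (2 * pi * (x \<bullet> \<xi>))) \<longlonglongrightarrow> fourier u \<xi> * cis (2 * pi * (x \<bullet> \<xi>))"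
    proof (rule AE_I2)
      fix \<xi> :: 'a
      have lim: "(\<lambda>n. exp (- pi * (1 / real (Suc n)) * (norm \<xi>)\<^sup>2)) \<longlonglongrightarrow> 1"
        by real_asymp
      show "(\<lambda>n. fourier u \<xi> * complex_of_real (exp (- pi * (1 / real (Suc n)) * (norm \<xi>)\<^sup>2))
          * cis (2 * pi * (x \<bullet> \<xi>))) \<longlonglongrightarrow> fourier u \<xi> * cis (2 * pi * (x \<bullet> \<xi>))"
        using tendsto_mult[OF tendsto_mult[OF tendsto_const tendsto_of_real[OF lim]] tendsto_const]
        by (simp only: of_real_1 mult_1_right)
    qed
  qed (use Fu in \<open>auto simp: norm_mult mult_left_le\<close>)
qed

lemma integrable_power2_if_bounded:
  fixes f :: "'a \<Rightarrow> real"
  assumes f: "integrable M f" and bound: "\<And>x. \<bar>f x\<bar> \<le> C"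
  shows "integrable M (\<lambda>x. (f x)\<^sup>2)"
proof (rule Bochner_Integration.integrable_bound[where f="\<lambda>x. C * f x"])
  have "(f x)\<^sup>2 \<le> \<bar>C\<bar> * \<bar>f x\<bar>" for x
  proof -
    have "(f x)\<^sup>2 = \<bar>f x\<bar> * \<bar>f x\<bar>" by (simp add: power2_eq_square)
    also have "\<dots> \<le> C * \<bar>f x\<bar>" by (rule mult_right_mono[OF bound abs_ge_zero])
    also have "\<dots> \<le> \<bar>C\<bar> * \<bar>f x\<bar>" by (simp add: mult_right_mono)
    finally show ?thesis .
  qed
  then show "AE x in M. norm ((f x)\<^sup>2) \<le> norm (C * f x)"
    by (simp add: abs_mult)
qed (use f in simp_all)

lemma plancherel:
  fixes u :: "'a::euclidean_space \<Rightarrow> real"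
  assumes [measurable]: "u \<in> borel_measurable borel" and u: "integrable lborel u"
    and Fu: "integrable lborel (fourier u)"
    and inversion: "\<And>x. complex_of_real (u x) = inverse_fourier (fourier u) x"
  shows "integrable lborel (\<lambda>x. (u x)\<^sup>2)"
    and "integrable lborel (\<lambda>\<xi>. (norm (fourier u \<xi>))\<^sup>2)"
    and "(\<integral>x. (u x)\<^sup>2 \<partial>lborel) = (\<integral>\<xi>. (norm (fourier u \<xi>))\<^sup>2 \<partial>lborel)"
proof -
  have u_bound: "\<bar>u x\<bar> \<le> (\<integral>\<xi>. norm (fourier u \<xi>) \<partial>lborel)" for x
  proof -
    have "\<bar>u x\<bar> = norm (inverse_fourier (fourier u) x)"
      by (simp flip: inversion)
    then show ?thesis
      using integral_norm_bound[of lborel "\<lambda>\<xi>. fourier u \<xi> * cis (2 * pi * (x \<bullet> \<xi>))"]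
      by (simp add: inverse_fourier_def norm_mult)
  qed
  then show "integrable lborel (\<lambda>x. (u x)\<^sup>2)"
    by (rule integrable_power2_if_bounded[OF u])
  show "integrable lborel (\<lambda>\<xi>. (norm (fourier u \<xi>))\<^sup>2)"
    by (rule integrable_power2_if_bounded[OF integrable_norm[OF Fu], where C="\<integral>x. \<bar>u x\<bar> \<partial>lborel"])
      (simp add: norm_fourier_le)
  define h where "h = (\<lambda>(y::'a) (\<xi>::'a). complex_of_real (u y) * (fourier u \<xi> * cis (2 * pi * (y \<bullet> \<xi>))))"
  have "integrable (lborel \<Otimes>\<^sub>M lborel) (case_prod h)"
    by (rule integrable_pair_lborel_bound[where p="\<lambda>y. \<bar>u y\<bar>" and q="\<lambda>\<xi>. norm (fourier u \<xi>)"])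
      (use u Fu in \<open>auto simp: h_def norm_mult\<close>)
  have "complex_of_real (\<integral>x. (u x)\<^sup>2 \<partial>lborel)
      = (\<integral>y. complex_of_real (u y) * inverse_fourier (fourier u) y \<partial>lborel)"
    by (simp add: power2_eq_square flip: inversion integral_complex_of_real)
  also have "\<dots> = (\<integral>y. (\<integral>\<xi>. h y \<xi> \<partial>lborel) \<partial>lborel)"
    by (simp add: h_def inverse_fourier_def)
  also have "\<dots> = (\<integral>\<xi>. (\<integral>y. h y \<xi> \<partial>lborel) \<partial>lborel)"
    by (rule lborel_pair.Fubini_integral[symmetric]) fact
  also have "\<dots> = (\<integral>\<xi>. complex_of_real ((norm (fourier u \<xi>))\<^sup>2) \<partial>lborel)"
  proof (intro Bochner_Integration.integral_cong refl)
    fix \<xi>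
    have "h y \<xi> = fourier u \<xi> * (complex_of_real (u y) * cis (2 * pi * (y \<bullet> \<xi>)))" for y
      unfolding h_def by (rule mult.left_commute)
    then show "(\<integral>y. h y \<xi> \<partial>lborel) = complex_of_real ((norm (fourier u \<xi>))\<^sup>2)"
      unfolding complex_norm_square by (simp add: cnj_fourier)
  qed
  finally show "(\<integral>x. (u x)\<^sup>2 \<partial>lborel) = (\<integral>\<xi>. (norm (fourier u \<xi>))\<^sup>2 \<partial>lborel)"
    by (simp only: integral_complex_of_real of_real_eq_iff)
qed

section \<open>Convolution\<close>

definition conv :: "('a::euclidean_space \<Rightarrow> real) \<Rightarrow> ('a \<Rightarrow> real) \<Rightarrow> 'a \<Rightarrow> real" where
  "conv f p x = (\<integral>y. f y * p (x - y) \<partial>lborel)"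

lemma integrable_conv_kernel:
  fixes f p :: "'a::euclidean_space \<Rightarrow> real"
  assumes [measurable]: "f \<in> borel_measurable borel" "p \<in> borel_measurable borel"
    and f: "integrable lborel f" and p: "integrable lborel p"
  shows "integrable (lborel \<Otimes>\<^sub>M lborel) (\<lambda>(y, x). f y * p (x - y))"
proof (rule lborel_pair.Fubini_integrable)
  have "(\<integral>x. \<bar>p (x - y)\<bar> \<partial>lborel) = (\<integral>x. \<bar>p x\<bar> \<partial>lborel)" for y
    by (rule lborel_integral_translate) simp
  then show "integrable lborel (\<lambda>y. \<integral>x. norm (case (y, x) of (y, x) \<Rightarrow> f y * p (x - y)) \<partial>lborel)"
    using f by (simp add: abs_mult)
  show "AE y in lborel. integrable lborel (\<lambda>x. case (y, x) of (y, x) \<Rightarrow> f y * p (x - y))"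
    using p by (simp add: lborel_integral_translate)
qed simp

lemma integrable_conv:
  fixes f p :: "'a::euclidean_space \<Rightarrow> real"
  assumes "f \<in> borel_measurable borel" "p \<in> borel_measurable borel"
    and "integrable lborel f" "integrable lborel p"
  shows "integrable lborel (conv f p)"
proof -
  have "integrable lborel (\<lambda>x. \<integral>y. f y * p (x - y) \<partial>lborel)"
    using lborel_pair.integrable_snd[OF integrable_conv_kernel[OF assms]] by simp
  then show ?thesis unfolding conv_def[abs_def] .
qed

lemma abs_conv_le:
  fixes f p :: "'a::euclidean_space \<Rightarrow> real"
  assumes [measurable]: "f \<in> borel_measurable borel" "p \<in> borel_measurable borel"
    and f: "integrable lborel f" and p_bound: "AE z in lborel. \<bar>p z\<bar> \<le> a"
  shows "\<bar>conv f p x\<bar> \<le> a * (\<integral>y. \<bar>f y\<bar> \<partial>lborel)"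
proof -
  have bound: "AE y in lborel. \<bar>f y * p (x - y)\<bar> \<le> a * \<bar>f y\<bar>"
    using AE_lborel_reflect[OF p_bound, of x]
  proof eventually_elim
    case (elim y)
    then have "\<bar>f y\<bar> * \<bar>p (x - y)\<bar> \<le> \<bar>f y\<bar> * a"
      by (intro mult_left_mono) simp_all
    then show ?case by (simp add: abs_mult mult.commute)
  qed
  have "integrable lborel (\<lambda>y. f y * p (x - y))"
  proof (rule Bochner_Integration.integrable_bound[where f="\<lambda>y. a * f y"])
    show "AE y in lborel. norm (f y * p (x - y)) \<le> norm (a * f y)"
      using bound
    proof eventually_elim
      case (elim y)
      moreover have "a * \<bar>f y\<bar> \<le> \<bar>a\<bar> * \<bar>f y\<bar>"
        by (simp add: mult_right_mono)
      ultimately show ?case by (simp add: abs_mult)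
    qed
  qed (use f in simp_all)
  have "\<bar>conv f p x\<bar> \<le> (\<integral>y. \<bar>f y * p (x - y)\<bar> \<partial>lborel)"
    unfolding conv_def using integral_norm_bound[of lborel "\<lambda>y. f y * p (x - y)"] by simp
  also have "\<dots> \<le> (\<integral>y. a * \<bar>f y\<bar> \<partial>lborel)"
    using bound f \<open>integrable lborel (\<lambda>y. f y * p (x - y))\<close> by (intro integral_mono_AE) auto
  finally show ?thesis by simp
qed

lemma integral_power2_conv_le:
  fixes f p :: "'a::euclidean_space \<Rightarrow> real"
  assumes [measurable]: "f \<in> borel_measurable borel" "p \<in> borel_measurable borel"
    and f: "integrable lborel f" and p: "integrable lborel p" and p_bound: "AE z in lborel. \<bar>p z\<bar> \<le> a"
  shows "(\<integral>x. (conv f p x)\<^sup>2 \<partial>lborel) \<le> a * (\<integral>y. \<bar>f y\<bar> \<partial>lborel) * (\<integral>x. \<bar>conv f p x\<bar> \<partial>lborel)"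
proof -
  have g: "integrable lborel (conv f p)"
    by (rule integrable_conv[OF assms(1,2) f p])
  have "(conv f p x)\<^sup>2 \<le> a * (\<integral>y. \<bar>f y\<bar> \<partial>lborel) * \<bar>conv f p x\<bar>" for x
  proof -
    have "(conv f p x)\<^sup>2 = \<bar>conv f p x\<bar> * \<bar>conv f p x\<bar>" by (simp add: power2_eq_square)
    also have "\<dots> \<le> a * (\<integral>y. \<bar>f y\<bar> \<partial>lborel) * \<bar>conv f p x\<bar>"
      by (intro mult_right_mono abs_conv_le[OF assms(1,2) f p_bound]) simp
    finally show ?thesis .
  qed
  moreover have "integrable lborel (\<lambda>x. (conv f p x)\<^sup>2)"
    using integrable_power2_if_bounded[OF g abs_conv_le[OF assms(1,2) f p_bound]] .
  ultimately have "(\<integral>x. (conv f p x)\<^sup>2 \<partial>lborel) \<le> (\<integral>x. a * (\<integral>y. \<bar>f y\<bar> \<partial>lborel) * \<bar>conv f p x\<bar> \<partial>lborel)"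
    using g by (intro integral_mono) auto
  then show ?thesis
    by simp
qed

lemma fourier_conv:
  fixes f p :: "'a::euclidean_space \<Rightarrow> real"
  assumes [measurable]: "f \<in> borel_measurable borel" "p \<in> borel_measurable borel"
    and f: "integrable lborel f" and p: "integrable lborel p"
  shows "fourier (conv f p) \<xi> = fourier f \<xi> * fourier p \<xi>"
proof -
  define H where "H = (\<lambda>(y::'a) (x::'a). complex_of_real (f y) * complex_of_real (p (x - y)) * cis (- 2 * pi * (x \<bullet> \<xi>)))"
  have H: "integrable (lborel \<Otimes>\<^sub>M lborel) (case_prod H)"
    by (rule Bochner_Integration.integrable_bound[OF integrable_conv_kernel[OF assms]])
      (auto simp: H_def norm_mult abs_mult split: prod.split)
  have "fourier (conv f p) \<xi> = (\<integral>x. (\<integral>y. H y x \<partial>lborel) \<partial>lborel)"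
    unfolding fourier_def conv_def H_def integral_complex_of_real[symmetric]
    by (simp only: of_real_mult integral_mult_left_zero)
  also have "\<dots> = (\<integral>y. (\<integral>x. H y x \<partial>lborel) \<partial>lborel)"
    by (rule lborel_pair.Fubini_integral[OF H])
  also have "\<dots> = (\<integral>y. complex_of_real (f y) * (cis (- 2 * pi * (y \<bullet> \<xi>)) * fourier p \<xi>) \<partial>lborel)"
  proof (intro Bochner_Integration.integral_cong refl)
    fix y :: 'a
    have "(\<integral>x. complex_of_real (p (x - y)) * cis (- 2 * pi * (x \<bullet> \<xi>)) \<partial>lborel)
        = (\<integral>x. complex_of_real (p x) * cis (- 2 * pi * ((x + y) \<bullet> \<xi>)) \<partial>lborel)"
      using lborel_integral_translate(1)[of "\<lambda>x. complex_of_real (p x) * cis (- 2 * pi * ((x + y) \<bullet> \<xi>))" y]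
      by simp
    also have "\<dots> = (\<integral>x. cis (- 2 * pi * (y \<bullet> \<xi>)) * (complex_of_real (p x) * cis (- 2 * pi * (x \<bullet> \<xi>))) \<partial>lborel)"
    proof -
      have "cis (- 2 * pi * ((x + y) \<bullet> \<xi>)) = cis (- 2 * pi * (y \<bullet> \<xi>)) * cis (- 2 * pi * (x \<bullet> \<xi>))" for x
        by (simp add: cis_mult algebra_simps)
      then show ?thesis by (simp only: mult_ac)
    qed
    also have "\<dots> = cis (- 2 * pi * (y \<bullet> \<xi>)) * fourier p \<xi>"
      by (simp add: fourier_def)
    finally show "(\<integral>x. H y x \<partial>lborel) = complex_of_real (f y) * (cis (- 2 * pi * (y \<bullet> \<xi>)) * fourier p \<xi>)"
      by (simp add: H_def mult.assoc)
  qed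
  also have "\<dots> = fourier f \<xi> * fourier p \<xi>"
    unfolding fourier_def[of f] by (simp only: mult.assoc[symmetric] integral_mult_left_zero)
  finally show ?thesis .
qed

lemma integral_conv:
  fixes f p :: "'a::euclidean_space \<Rightarrow> real"
  assumes "f \<in> borel_measurable borel" "p \<in> borel_measurable borel"
    and "integrable lborel f" "integrable lborel p"
  shows "integral\<^sup>L lborel (conv f p) = integral\<^sup>L lborel f * integral\<^sup>L lborel p"
proof -
  have "complex_of_real (integral\<^sup>L lborel (conv f p))
      = complex_of_real (integral\<^sup>L lborel f * integral\<^sup>L lborel p)"
    using fourier_conv[OF assms, of 0] by (simp add: fourier_0)
  then show ?thesis
    by (simp only: of_real_eq_iff)
qed

lemma inverse_fourier_conv:
  fixes f p :: "'a::euclidean_space \<Rightarrow> real" and F :: "'a \<Rightarrow> complex"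
  assumes [measurable]: "p \<in> borel_measurable borel"
    and p: "integrable lborel p" and F: "integrable lborel F"
    and inversion: "\<And>y. complex_of_real (f y) = inverse_fourier F y"
  shows "complex_of_real (conv f p x) = inverse_fourier (\<lambda>\<xi>. F \<xi> * fourier p \<xi>) x"
proof -
  have [measurable]: "F \<in> borel_measurable borel"
    using F by (simp add: borel_measurable_integrable)
  define H where "H = (\<lambda>(\<xi>::'a) (y::'a). F \<xi> * cis (2 * pi * (y \<bullet> \<xi>)) * complex_of_real (p (x - y)))"
  have H: "integrable (lborel \<Otimes>\<^sub>M lborel) (case_prod H)"
    by (rule integrable_pair_lborel_bound[where p="\<lambda>\<xi>. norm (F \<xi>)" and q="\<lambda>y. \<bar>p (x - y)\<bar>"])
      (use F p in \<open>auto simp: H_def norm_mult lborel_integral_reflect\<close>)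
  have "complex_of_real (conv f p x) = (\<integral>y. (\<integral>\<xi>. H \<xi> y \<partial>lborel) \<partial>lborel)"
    unfolding conv_def H_def integral_complex_of_real[symmetric] of_real_mult inversion
    by (simp only: inverse_fourier_def integral_mult_left_zero)
  also have "\<dots> = (\<integral>\<xi>. (\<integral>y. H \<xi> y \<partial>lborel) \<partial>lborel)"
    by (rule lborel_pair.Fubini_integral[OF H])
  also have "\<dots> = inverse_fourier (\<lambda>\<xi>. F \<xi> * fourier p \<xi>) x"
    unfolding inverse_fourier_def
  proof (intro Bochner_Integration.integral_cong refl)
    fix \<xi> :: 'a
    have "(\<integral>y. cis (2 * pi * (y \<bullet> \<xi>)) * complex_of_real (p (x - y)) \<partial>lborel)
        = (\<integral>y. cis (2 * pi * ((x - y) \<bullet> \<xi>)) * complex_of_real (p y) \<partial>lborel)"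
      using lborel_integral_reflect(1)[of "\<lambda>y. cis (2 * pi * ((x - y) \<bullet> \<xi>)) * complex_of_real (p y)" x]
      by simp
    also have "\<dots> = (\<integral>y. cis (2 * pi * (x \<bullet> \<xi>)) * (complex_of_real (p y) * cis (- 2 * pi * (y \<bullet> \<xi>))) \<partial>lborel)"
    proof -
      have "cis (2 * pi * ((x - y) \<bullet> \<xi>)) = cis (2 * pi * (x \<bullet> \<xi>)) * cis (- 2 * pi * (y \<bullet> \<xi>))" for y
        by (simp add: cis_mult algebra_simps)
      then show ?thesis by (simp only: mult_ac)
    qed
    also have "\<dots> = fourier p \<xi> * cis (2 * pi * (x \<bullet> \<xi>))"
      by (simp add: fourier_def mult.commute)
    finally show "(\<integral>y. H \<xi> y \<partial>lborel) = F \<xi> * fourier p \<xi> * cis (2 * pi * (x \<bullet> \<xi>))"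
      by (simp add: H_def mult.assoc)
  qed
  finally show ?thesis .
qed

section \<open>Real functions with nonpositive integral\<close>

lemma integral_indicator_abs_power2_le:
  fixes h :: "'a \<Rightarrow> real"
  assumes [measurable]: "A \<in> sets M" "h \<in> borel_measurable M"
    and A: "emeasure M A < \<infinity>" and h: "integrable M h" and h2: "integrable M (\<lambda>x. (h x)\<^sup>2)"
  shows "(\<integral>x. indicator A x * \<bar>h x\<bar> \<partial>M)\<^sup>2 \<le> measure M A * (\<integral>x. (h x)\<^sup>2 \<partial>M)"
proof -
  have "integrable M (\<lambda>x. indicator A x * \<bar>h x\<bar>)"
    by (rule Bochner_Integration.integrable_bound[where f="\<lambda>x. \<bar>h x\<bar>"])
      (use h in \<open>auto simp: indicator_def\<close>)
  then have "ennreal ((\<integral>x. indicator A x * \<bar>h x\<bar> \<partial>M)\<^sup>2)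
      = (\<integral>\<^sup>+x. indicator A x * ennreal \<bar>h x\<bar> \<partial>M)\<^sup>2"
    by (simp add: nn_integral_eq_integral indicator_mult_ennreal ennreal_power)
  also have "\<dots> \<le> (\<integral>\<^sup>+x. (indicator A x)\<^sup>2 \<partial>M) * (\<integral>\<^sup>+x. (ennreal \<bar>h x\<bar>)\<^sup>2 \<partial>M)"
    by (rule Cauchy_Schwarz_nn_integral) simp_all
  also have "\<dots> = emeasure M A * ennreal (\<integral>x. (h x)\<^sup>2 \<partial>M)"
  proof -
    have "(indicator A x)\<^sup>2 = (indicator A x :: ennreal)" "(ennreal \<bar>h x\<bar>)\<^sup>2 = ennreal ((h x)\<^sup>2)" for x
      by (simp_all add: indicator_def ennreal_power)
    then show ?thesis
      using h2 by (simp add: nn_integral_eq_integral)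
  qed
  also have "\<dots> = ennreal (measure M A * (\<integral>x. (h x)\<^sup>2 \<partial>M))"
    using A by (simp add: emeasure_eq_ennreal_measure ennreal_mult)
  finally show ?thesis
    by simp
qed

lemma integral_abs_le_twice_negative_part:
  fixes h :: "'a \<Rightarrow> real"
  assumes [measurable]: "h \<in> borel_measurable M" and h: "integrable M h" and "integral\<^sup>L M h \<le> 0"
  shows "(\<integral>x. \<bar>h x\<bar> \<partial>M) \<le> 2 * (\<integral>x. indicator {x \<in> space M. h x < 0} x * \<bar>h x\<bar> \<partial>M)"
proof -
  define A where "A = {x \<in> space M. h x < 0}"
  have "integrable M (\<lambda>x. indicator A x * \<bar>h x\<bar>)"
    by (rule Bochner_Integration.integrable_bound[where f="\<lambda>x. \<bar>h x\<bar>"])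
      (use h in \<open>auto simp: A_def indicator_def\<close>)
  moreover have "(\<integral>x. \<bar>h x\<bar> \<partial>M) = (\<integral>x. h x + 2 * (indicator A x * \<bar>h x\<bar>) \<partial>M)"
    by (rule Bochner_Integration.integral_cong) (auto simp: A_def indicator_def)
  ultimately have "(\<integral>x. \<bar>h x\<bar> \<partial>M) = integral\<^sup>L M h + 2 * (\<integral>x. indicator A x * \<bar>h x\<bar> \<partial>M)"
    using h by simp
  then show ?thesis
    using assms(3) unfolding A_def by linarith
qed


lemma integral_abs_power2_le_measure_negative:
  fixes h :: "'a \<Rightarrow> real"
  assumes [measurable]: "h \<in> borel_measurable M" and h: "integrable M h"
    and h2: "integrable M (\<lambda>x. (h x)\<^sup>2)" and "integral\<^sup>L M h \<le> 0"
    and finite: "emeasure M {x \<in> space M. h x < 0} < \<infinity>"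
  shows "(\<integral>x. \<bar>h x\<bar> \<partial>M)\<^sup>2 \<le> 4 * measure M {x \<in> space M. h x < 0} * (\<integral>x. (h x)\<^sup>2 \<partial>M)"
proof -
  have "(\<integral>x. \<bar>h x\<bar> \<partial>M)\<^sup>2 \<le> (2 * (\<integral>x. indicator {x \<in> space M. h x < 0} x * \<bar>h x\<bar> \<partial>M))\<^sup>2"
    using integral_abs_le_twice_negative_part[OF assms(1,2,4)] by (intro power_mono) simp_all
  also have "\<dots> \<le> 4 * (measure M {x \<in> space M. h x < 0} * (\<integral>x. (h x)\<^sup>2 \<partial>M))"
    using integral_indicator_abs_power2_le[OF _ _ finite h h2] by (simp add: power_mult_distrib)
  finally show ?thesis by simp
qed

lemma emeasure_negative_pos:
  fixes h :: "'a \<Rightarrow> real"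
  assumes [measurable]: "h \<in> borel_measurable M" and h: "integrable M h"
    and "integral\<^sup>L M h \<le> 0" and "(\<integral>x. \<bar>h x\<bar> \<partial>M) > 0"
  shows "emeasure M {x \<in> space M. h x < 0} > 0"
proof (rule ccontr)
  assume "\<not> ?thesis"
  then have "AE x in M. x \<notin> {x \<in> space M. h x < 0}"
    by (intro AE_not_in) (simp add: null_sets_def)
  then have "(\<integral>x. indicator {x \<in> space M. h x < 0} x * \<bar>h x\<bar> \<partial>M) = 0"
    by (intro integral_eq_zero_AE) (auto elim: eventually_mono)
  then show False
    using integral_abs_le_twice_negative_part[OF assms(1-3)] assms(4) by simp
qed

section \<open>The uncertainty estimate\<close>

lemma fourier_inversion_band_limited:
  fixes f :: "'a::euclidean_space \<Rightarrow> real"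
  assumes cont: "continuous_on UNIV f" and f: "integrable lborel f"
    and supp: "\<And>\<xi>. \<xi> \<notin> cball 0 1 \<Longrightarrow> fourier f \<xi> = 0"
  shows "integrable lborel (fourier f)"
    and "\<And>x. complex_of_real (f x) = inverse_fourier (fourier f) x"
proof -
  have [measurable]: "f \<in> borel_measurable borel"
    using cont by (rule borel_measurable_continuous_onI)
  show Ff: "integrable lborel (fourier f)"
  proof (rule Bochner_Integration.integrable_bound[where f="\<lambda>\<xi>. (\<integral>x. \<bar>f x\<bar> \<partial>lborel) * indicator (cball (0::'a) 1) \<xi>"])
    show "integrable lborel (\<lambda>\<xi>. (\<integral>x. \<bar>f x\<bar> \<partial>lborel) * indicator (cball (0::'a) 1) \<xi>)"
      by (intro integrable_mult_right integrable_real_indicator) (auto simp: emeasure_cball)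
    show "AE \<xi> in lborel. norm (fourier f \<xi>) \<le> norm ((\<integral>x. \<bar>f x\<bar> \<partial>lborel) * indicator (cball (0::'a) 1) \<xi>)"
      using norm_fourier_le supp by (intro AE_I2) (auto simp: indicator_def)
  qed simp
  show "complex_of_real (f x) = inverse_fourier (fourier f) x" for x
    by (rule fourier_inversion[OF cont f Ff])
qed

lemma integral_power2_le_conv:
  fixes f p :: "'a::euclidean_space \<Rightarrow> real"
  assumes cont: "continuous_on UNIV f" and f: "integrable lborel f"
    and supp: "\<And>\<xi>. \<xi> \<notin> cball 0 1 \<Longrightarrow> fourier f \<xi> = 0"
    and [measurable]: "p \<in> borel_measurable borel" and p: "integrable lborel p"
    and p_lower: "\<And>\<xi>. \<xi> \<in> cball 0 1 \<Longrightarrow> 1 \<le> c * norm (fourier p \<xi>)"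
  shows "integrable lborel (\<lambda>x. (f x)\<^sup>2)" and "integrable lborel (\<lambda>x. (conv f p x)\<^sup>2)"
    and "(\<integral>x. (f x)\<^sup>2 \<partial>lborel) \<le> c\<^sup>2 * (\<integral>x. (conv f p x)\<^sup>2 \<partial>lborel)"
proof -
  have [measurable]: "f \<in> borel_measurable borel"
    using cont by (rule borel_measurable_continuous_onI)
  note Ff = fourier_inversion_band_limited[OF cont f supp]
  have [measurable]: "conv f p \<in> borel_measurable borel"
    using integrable_conv[OF _ _ f p] by (simp add: borel_measurable_integrable)
  have Fg: "fourier (conv f p) = (\<lambda>\<xi>. fourier f \<xi> * fourier p \<xi>)"
    using fourier_conv[OF _ _ f p] by (simp add: fun_eq_iff)
  have Fg_int: "integrable lborel (fourier (conv f p))"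
    unfolding Fg
  proof (rule Bochner_Integration.integrable_bound[where f="\<lambda>\<xi>. (\<integral>x. \<bar>p x\<bar> \<partial>lborel) * norm (fourier f \<xi>)"])
    show "AE \<xi> in lborel. norm (fourier f \<xi> * fourier p \<xi>) \<le> norm ((\<integral>x. \<bar>p x\<bar> \<partial>lborel) * norm (fourier f \<xi>))"
      using norm_fourier_le[of p] by (intro AE_I2) (simp add: norm_mult mult.commute mult_left_mono)
  qed (use Ff(1) in simp_all)
  note Pf = plancherel[OF _ f Ff]
  note Pg = plancherel[OF _ integrable_conv[OF _ _ f p] Fg_int
      inverse_fourier_conv[OF _ p Ff(1,2), unfolded Fg[symmetric]]]
  show "integrable lborel (\<lambda>x. (f x)\<^sup>2)" "integrable lborel (\<lambda>x. (conv f p x)\<^sup>2)"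
    using Pf(1) Pg(1) by simp_all
  have "(norm (fourier f \<xi>))\<^sup>2 \<le> c\<^sup>2 * (norm (fourier (conv f p) \<xi>))\<^sup>2" for \<xi>
  proof (cases "\<xi> \<in> cball 0 1")
    case True
    have "(norm (fourier f \<xi>))\<^sup>2 * 1 \<le> (norm (fourier f \<xi>))\<^sup>2 * (c * norm (fourier p \<xi>))\<^sup>2"
      using p_lower[OF True] by (intro mult_left_mono) simp_all
    then show ?thesis by (simp add: Fg norm_mult power_mult_distrib mult_ac)
  qed (simp add: supp)
  then have "(\<integral>\<xi>. (norm (fourier f \<xi>))\<^sup>2 \<partial>lborel) \<le> (\<integral>\<xi>. c\<^sup>2 * (norm (fourier (conv f p) \<xi>))\<^sup>2 \<partial>lborel)"
    using Pf(2) Pg(2) by (intro integral_mono) simp_all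
  then show "(\<integral>x. (f x)\<^sup>2 \<partial>lborel) \<le> c\<^sup>2 * (\<integral>x. (conv f p x)\<^sup>2 \<partial>lborel)"
    using Pf(3) Pg(3) by simp
qed

lemma integral_abs_conv_pos:
  fixes f p :: "'a::euclidean_space \<Rightarrow> real"
  assumes cont: "continuous_on UNIV f" and f: "integrable lborel f"
    and supp: "\<And>\<xi>. \<xi> \<notin> cball 0 1 \<Longrightarrow> fourier f \<xi> = 0" and f_nonzero: "f \<noteq> (\<lambda>x. 0)"
    and p_meas[measurable]: "p \<in> borel_measurable borel" and p: "integrable lborel p"
    and p_nonzero: "\<And>\<xi>. \<xi> \<in> cball 0 1 \<Longrightarrow> fourier p \<xi> \<noteq> 0"
  shows "(\<integral>x. \<bar>f x\<bar> \<partial>lborel) > 0" and "(\<integral>x. \<bar>conv f p x\<bar> \<partial>lborel) > 0"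
proof -
  have f_meas[measurable]: "f \<in> borel_measurable borel"
    using cont by (rule borel_measurable_continuous_onI)
  have g_meas[measurable]: "conv f p \<in> borel_measurable borel"
    using integrable_conv[OF _ _ f p] by (simp add: borel_measurable_integrable)
  note Ff = fourier_inversion_band_limited[OF cont f supp]
  have Ff_nonzero: "\<exists>\<xi>\<in>cball 0 1. fourier f \<xi> \<noteq> 0"
  proof (rule ccontr)
    assume "\<not> ?thesis"
    then have "fourier f = (\<lambda>\<xi>. 0)"
      using supp by (auto simp: fun_eq_iff)
    then show False
      using Ff(2) f_nonzero by (auto simp: inverse_fourier_def fun_eq_iff)
  qed
  have "(\<integral>x. \<bar>f x\<bar> \<partial>lborel) \<noteq> 0"
    using fourier_eq_0_if_integral_abs_eq_0[OF f_meas f] Ff_nonzero by blast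
  then show "(\<integral>x. \<bar>f x\<bar> \<partial>lborel) > 0"
    by (simp add: order_less_le)
  have "fourier (conv f p) \<xi> \<noteq> 0" if "\<xi> \<in> cball 0 1" "fourier f \<xi> \<noteq> 0" for \<xi>
    using that p_nonzero by (simp add: fourier_conv[OF _ _ f p])
  then have "(\<integral>x. \<bar>conv f p x\<bar> \<partial>lborel) \<noteq> 0"
    using fourier_eq_0_if_integral_abs_eq_0[OF g_meas integrable_conv[OF f_meas p_meas f p]] Ff_nonzero by blast
  then show "(\<integral>x. \<bar>conv f p x\<bar> \<partial>lborel) > 0"
    by (simp add: order_less_le)
qed

lemma uncertainty_arith:
  fixes F G \<alpha> \<beta> Nf Ng a c :: real
  assumes F: "F > 0" and G: "G > 0" and \<alpha>: "\<alpha> \<ge> 0" and \<beta>: "\<beta> \<ge> 0"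
    and F_le: "F\<^sup>2 \<le> 4 * \<alpha> * Nf" and G_le: "G\<^sup>2 \<le> 4 * \<beta> * Ng"
    and Nf_le: "Nf \<le> c\<^sup>2 * Ng" and Ng_le: "Ng \<le> a * F * G"
  shows "1 \<le> 16 * \<alpha> * \<beta> * a\<^sup>2 * c\<^sup>2"
proof -
  have "0 < G\<^sup>2" using G by simp
  then have Ng: "0 \<le> Ng" using G_le \<beta> by (smt (verit) mult_nonneg_nonpos)
  then have Nf: "0 \<le> Nf" using F_le \<alpha> \<open>0 < G\<^sup>2\<close> F by (smt (verit) mult_nonneg_nonpos zero_less_power)
  have "F\<^sup>2 * G\<^sup>2 \<le> (4 * \<alpha> * Nf) * (4 * \<beta> * Ng)"
    using F_le G_le \<alpha> \<beta> Ng Nf by (intro mult_mono) simp_all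
  also have "\<dots> = 16 * \<alpha> * \<beta> * (Nf * Ng)"
    by (simp add: mult_ac)
  also have "\<dots> \<le> 16 * \<alpha> * \<beta> * (c\<^sup>2 * Ng * Ng)"
    using mult_right_mono[OF Nf_le Ng] \<alpha> \<beta> by (intro mult_left_mono) simp_all
  also have "\<dots> = 16 * \<alpha> * \<beta> * c\<^sup>2 * Ng\<^sup>2"
    by (simp add: power2_eq_square mult_ac)
  also have "\<dots> \<le> 16 * \<alpha> * \<beta> * c\<^sup>2 * (a * F * G)\<^sup>2"
    using Ng Ng_le \<alpha> \<beta> by (intro mult_left_mono power_mono) simp_all
  also have "\<dots> = (16 * \<alpha> * \<beta> * a\<^sup>2 * c\<^sup>2) * (F\<^sup>2 * G\<^sup>2)"
    by (simp add: power_mult_distrib mult_ac)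
  finally show ?thesis
    using F G by (simp add: mult_le_cancel_right1)
qed

lemma ennreal_inverse_le_emeasure_product:
  assumes A: "emeasure M A > 0" and B: "emeasure M B > 0"
    and finite: "emeasure M A < \<infinity> \<Longrightarrow> emeasure M B < \<infinity> \<Longrightarrow> 1 \<le> K * (measure M A * measure M B)"
  shows "ennreal (1 / K) \<le> emeasure M A * emeasure M B"
proof (cases "emeasure M A < \<infinity> \<and> emeasure M B < \<infinity>")
  case True
  then have K: "1 \<le> K * (measure M A * measure M B)"
    using finite by simp
  moreover have "K > 0"
  proof (rule ccontr)
    assume "\<not> K > 0"
    then have "K * (measure M A * measure M B) \<le> 0"
      by (intro mult_nonpos_nonneg) auto
    with K show False by simp
  qed
  ultimately have "1 / K \<le> measure M A * measure M B"
    by (simp add: divide_le_eq mult.commute)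
  moreover have "emeasure M A * emeasure M B = ennreal (measure M A * measure M B)"
    using True by (simp add: emeasure_eq_ennreal_measure less_top ennreal_mult)
  ultimately show ?thesis
    by (simp add: ennreal_leI)
next
  case False
  then have "emeasure M A * emeasure M B = \<infinity>"
    using A B by (auto simp: ennreal_mult_eq_top_iff less_top[symmetric])
  then show ?thesis
    by simp
qed

lemma emeasure_negative_sets_product_ge:
  fixes f p :: "'a::euclidean_space \<Rightarrow> real"
  assumes cont: "continuous_on UNIV f" and f: "integrable lborel f"
    and supp: "\<And>\<xi>. \<xi> \<notin> cball 0 1 \<Longrightarrow> fourier f \<xi> = 0" and f_nonzero: "f \<noteq> (\<lambda>x. 0)"
    and f_int: "integral\<^sup>L lborel f \<le> 0"
    and p_meas[measurable]: "p \<in> borel_measurable borel" and p: "integrable lborel p"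
    and p_bound: "AE x in lborel. \<bar>p x\<bar> \<le> a" and p_int: "integral\<^sup>L lborel p \<ge> 0"
    and p_lower: "\<And>\<xi>. \<xi> \<in> cball 0 1 \<Longrightarrow> 1 \<le> c * norm (fourier p \<xi>)"
  shows "ennreal (1 / (16 * a\<^sup>2 * c\<^sup>2))
    \<le> emeasure lborel {x. f x < 0} * emeasure lborel {x. conv f p x < 0}"
proof -
  define g where "g = conv f p"
  define F where "F = (\<integral>x. \<bar>f x\<bar> \<partial>lborel)"
  define G where "G = (\<integral>x. \<bar>g x\<bar> \<partial>lborel)"
  have f_meas[measurable]: "f \<in> borel_measurable borel"
    using cont by (rule borel_measurable_continuous_onI)
  have g: "integrable lborel g"
    unfolding g_def by (rule integrable_conv[OF f_meas p_meas f p])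
  have g_int: "integral\<^sup>L lborel g \<le> 0"
    using f_int p_int by (simp add: g_def integral_conv[OF f_meas p_meas f p] mult_nonpos_nonneg)
  have "\<xi> \<in> cball 0 1 \<Longrightarrow> fourier p \<xi> \<noteq> 0" for \<xi>
    using p_lower[of \<xi>] by auto
  note F_G_pos = integral_abs_conv_pos[OF cont f supp f_nonzero p_meas p this, folded g_def, folded F_def G_def]
  note L2 = integral_power2_le_conv[OF cont f supp p_meas p p_lower, folded g_def]
  show ?thesis
    unfolding g_def[symmetric]
  proof (rule ennreal_inverse_le_emeasure_product)
    show "emeasure lborel {x. f x < 0} > 0"
      using emeasure_negative_pos[of f lborel] f f_int F_G_pos(1) by (simp add: F_def)
    show "emeasure lborel {x. g x < 0} > 0"
      using emeasure_negative_pos[of g lborel] g g_int F_G_pos(2) by (simp add: G_def)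
    assume "emeasure lborel {x. f x < 0} < \<infinity>" "emeasure lborel {x. g x < 0} < \<infinity>"
    then have "F\<^sup>2 \<le> 4 * measure lborel {x. f x < 0} * (\<integral>x. (f x)\<^sup>2 \<partial>lborel)"
      and "G\<^sup>2 \<le> 4 * measure lborel {x. g x < 0} * (\<integral>x. (g x)\<^sup>2 \<partial>lborel)"
      using integral_abs_power2_le_measure_negative[of f lborel] f L2(1) f_int
        integral_abs_power2_le_measure_negative[of g lborel] g L2(2) g_int
      by (simp_all add: F_def G_def)
    moreover have "(\<integral>x. (g x)\<^sup>2 \<partial>lborel) \<le> a * F * G"
      unfolding g_def F_def G_def by (rule integral_power2_conv_le[OF f_meas p_meas f p p_bound])
    ultimately have "1 \<le> 16 * measure lborel {x. f x < 0} * measure lborel {x. g x < 0} * a\<^sup>2 * c\<^sup>2"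
      using F_G_pos L2(3) by (intro uncertainty_arith) simp_all
    then show "1 \<le> 16 * a\<^sup>2 * c\<^sup>2 * (measure lborel {x. f x < 0} * measure lborel {x. g x < 0})"
      by (simp add: mult_ac)
  qed
qed

section \<open>Back to Lebesgue measure\<close>

lemma integral_lebesgue_eq_lborel_AE:
  fixes u v :: "'a::euclidean_space \<Rightarrow> 'b::euclidean_space"
  assumes [measurable]: "v \<in> borel_measurable borel" and "AE x in lborel. u x = v x"
  shows "(\<integral>x. u x \<partial>lebesgue) = (\<integral>x. v x \<partial>lborel)"
proof -
  have v: "v \<in> borel_measurable lebesgue"
    by (rule measurable_completion) simp
  have AE: "AE x in lebesgue. v x = u x"
    using AE_completion[OF assms(2)] by (auto elim: eventually_mono)
  have "(\<integral>x. u x \<partial>lebesgue) = (\<integral>x. v x \<partial>lebesgue)"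
    using v borel_measurable_AE[OF v AE] AE by (intro integral_cong_AE) (auto elim: eventually_mono)
  also have "\<dots> = (\<integral>x. v x \<partial>lborel)"
    by (rule integral_completion) simp
  finally show ?thesis .
qed

lemma fourier_transform_eq_fourier:
  fixes u p :: "'a::euclidean_space \<Rightarrow> real"
  assumes [measurable]: "p \<in> borel_measurable borel" and "AE x in lborel. u x = p x"
  shows "fourier_transform u \<xi> = fourier p \<xi>"
  unfolding fourier_transform_def fourier_def
  by (rule integral_lebesgue_eq_lborel_AE) (use assms(2) in \<open>auto elim: eventually_mono\<close>)

text \<open>\<open>Characteristic_Functions\<close> also provides a constant \<open>convolution\<close> (on measures).\<close>
hide_const (open) Convolution.convolution

lemma convolution_eq_conv:
  fixes f \<psi> p :: "'a::euclidean_space \<Rightarrow> real"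
  assumes [measurable]: "f \<in> borel_measurable borel" "p \<in> borel_measurable borel"
    and "AE x in lborel. \<psi> x = p x"
  shows "convolution f \<psi> x = conv f p x"
  unfolding Defs.convolution_def conv_def
  by (rule integral_lebesgue_eq_lborel_AE) (use AE_lborel_reflect[OF assms(3), of x] in \<open>auto elim: eventually_mono\<close>)

lemma AE_abs_le_Linf_norm:
  fixes \<psi> p :: "'a::euclidean_space \<Rightarrow> real"
  assumes "Linf_norm \<psi> < \<infinity>" and "AE x in lborel. \<psi> x = p x"
  shows "AE x in lborel. \<bar>p x\<bar> \<le> real_of_ereal (Linf_norm \<psi>)"
proof -
  have "AE x in lebesgue. ereal \<bar>\<psi> x\<bar> \<le> Linf_norm \<psi>"
    unfolding Linf_norm_def by (rule esssup_AE)
  then have AE: "AE x in lborel. ereal \<bar>\<psi> x\<bar> \<le> Linf_norm \<psi>"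
    by (simp add: AE_completion_iff)
  moreover have "Linf_norm \<psi> \<noteq> - \<infinity>"
  proof
    assume "Linf_norm \<psi> = - \<infinity>"
    then have "AE x in (lborel :: 'a measure). False"
      using AE by simp
    then show False
      by (simp add: trivial_limit_def[symmetric] ae_filter_eq_bot_iff)
  qed
  ultimately show ?thesis
    using assms by (cases "Linf_norm \<psi>") (auto elim: eventually_mono)
qed

lemma powr_neg_inverse_le:
  fixes M r :: real
  assumes d: "d > 0" and r: "r > 0" and M: "M \<ge> 0" and bound: "1 / M \<le> r ^ d"
  shows "M powr (- 1 / real d) \<le> r"
proof (cases "M = 0")
  case False
  then have "M powr (- 1 / real d) = (1 / M) powr (1 / real d)"
    using M by (simp add: powr_minus_divide powr_divide)
  also have "\<dots> \<le> (r ^ d) powr (1 / real d)"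
    using bound M by (intro powr_mono2) simp_all
  also have "\<dots> = r"
    using d r by (simp add: powr_realpow[symmetric] powr_powr)
  finally show ?thesis .
qed (use r in simp)

lemma radius_product_ge:
  fixes A B :: "'a::euclidean_space set"
  assumes prod: "ennreal (1 / K) \<le> emeasure lborel A * emeasure lborel B" and K: "K \<ge> 0"
    and A: "A \<subseteq> ball 0 r1" and B: "B \<subseteq> ball 0 r2" and r1: "r1 > 0" and r2: "r2 > 0"
  shows "(K * (measure lborel (cball (0::'a) 1))\<^sup>2) powr (- 1 / real DIM('a)) \<le> r1 * r2"
proof (rule powr_neg_inverse_le)
  define V where "V = measure lborel (cball (0::'a) 1)"
  have ball: "emeasure lborel (ball (0::'a) r) = ennreal (V * r ^ DIM('a))" if "r \<ge> 0" for r
    using emeasure_ball[OF that] emeasure_cball[of 1 "0::'a"] by (simp add: V_def measure_def)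
  have "ennreal (1 / K) \<le> emeasure lborel (ball (0::'a) r1) * emeasure lborel (ball (0::'a) r2)"
    by (rule order_trans[OF prod mult_mono]) (simp_all add: emeasure_mono[OF A] emeasure_mono[OF B])
  also have "\<dots> = ennreal (V\<^sup>2 * (r1 * r2) ^ DIM('a))"
    using r1 r2 by (simp add: ball V_def ennreal_mult[symmetric] power_mult_distrib power2_eq_square mult_ac)
  finally have "1 / K \<le> V\<^sup>2 * (r1 * r2) ^ DIM('a)"
    using r1 r2 by (simp add: V_def)
  then show "1 / (K * V\<^sup>2) \<le> (r1 * r2) ^ DIM('a)"
  proof (cases "V = 0")
    case False
    then have "(1 / K) / V\<^sup>2 \<le> (r1 * r2) ^ DIM('a)"
      using \<open>1 / K \<le> _\<close> by (subst pos_divide_le_eq) (simp_all add: mult.commute)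
    then show ?thesis by simp
  qed (use r1 r2 in simp)
qed (use K r1 r2 in simp_all)

lemma PW_lborel:
  fixes f :: "'a::euclidean_space \<Rightarrow> real"
  assumes "f \<in> PW"
  shows "continuous_on UNIV f" and "integrable lborel f"
    and "\<And>\<xi>. \<xi> \<notin> cball 0 1 \<Longrightarrow> fourier f \<xi> = 0"
proof -
  show cont: "continuous_on UNIV f"
    using assms by (simp add: PW_def)
  then have [measurable]: "f \<in> borel_measurable borel"
    by (rule borel_measurable_continuous_onI)
  show "integrable lborel f"
    using assms by (simp add: PW_def integrable_completion)
  have "fourier_transform f = fourier f"
    by (intro ext fourier_transform_eq_fourier) simp_all
  then show "fourier f \<xi> = 0" if "\<xi> \<notin> cball 0 1" for \<xi>
    using assms that closure_subset[of "{\<xi>. fourier_transform f \<xi> \<noteq> 0}"] by (auto simp: PW_def)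
qed

lemma borel_representative:
  fixes \<psi> :: "'a::euclidean_space \<Rightarrow> real"
  assumes "integrable lebesgue \<psi>"
  obtains p where "p \<in> borel_measurable borel" and "AE x in lborel. \<psi> x = p x"
    and "integrable lborel p" and "(\<integral>x. \<bar>\<psi> x\<bar> \<partial>lebesgue) = (\<integral>x. \<bar>p x\<bar> \<partial>lborel)"
proof -
  obtain p where p: "p \<in> borel_measurable lborel" and AE: "AE x in lborel. \<psi> x = p x"
    using completion_ex_borel_measurable_real[OF borel_measurable_integrable[OF assms]] by blast
  have [measurable]: "p \<in> borel_measurable borel"
    using p by simp
  have "integrable lebesgue p"
    by (rule integrable_cong_AE_imp[OF assms measurable_completion[OF p] AE_completion[OF AE]])
  moreover have "(\<integral>x. \<bar>\<psi> x\<bar> \<partial>lebesgue) = (\<integral>x. \<bar>p x\<bar> \<partial>lborel)"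
    using AE by (intro integral_lebesgue_eq_lborel_AE) (auto elim: eventually_mono)
  ultimately show ?thesis
    using that AE by (simp add: integrable_completion)
qed


lemma uncertainty_constant_le:
  fixes a b c :: real
  assumes c: "c > 0" and bc: "1 \<le> b * c"
  shows "1 / (16 * a\<^sup>2 * b\<^sup>2 * c ^ 4) \<le> 1 / (16 * a\<^sup>2 * c\<^sup>2)"
proof (cases "a = 0")
  case False
  have pos: "0 < 16 * a\<^sup>2 * c\<^sup>2"
    using False c by simp
  have "1 \<le> (b * c)\<^sup>2"
    using bc by simp
  then have "16 * a\<^sup>2 * c\<^sup>2 \<le> 16 * a\<^sup>2 * c\<^sup>2 * (b * c)\<^sup>2"
    using mult_left_mono[of 1 "(b * c)\<^sup>2" "16 * a\<^sup>2 * c\<^sup>2"] pos by simp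
  moreover have "16 * a\<^sup>2 * b\<^sup>2 * c ^ 4 = 16 * a\<^sup>2 * c\<^sup>2 * (b * c)\<^sup>2"
    by algebra
  ultimately show ?thesis
    using pos by (intro divide_left_mono) (auto intro!: mult_pos_pos)
qed simp

theorem mainTheorem18:
  fixes \<psi> f :: "'a::euclidean_space \<Rightarrow> real" and a b c :: real
  assumes psi_L1: "integrable lebesgue \<psi>"
    and psi_Linf: "Linf_norm \<psi> < \<infinity>"
    and psi_hat0: "Re (fourier_transform \<psi> 0) \<ge> 0"
    and a_def: "a = real_of_ereal (Linf_norm \<psi>)"
    and b_def: "b = (\<integral>x. \<bar>\<psi> x\<bar> \<partial>lebesgue)"
    and c_pos: "c > 0"
    and c_bound: "\<And>\<xi>. \<xi> \<in> cball 0 1 \<Longrightarrow> c * norm (fourier_transform \<psi> \<xi>) \<ge> 1"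
    and f_PW: "f \<in> PW"
    and f_nonzero: "f \<noteq> (\<lambda>x. 0)"
    and f_int: "(\<integral>x. f x \<partial>lebesgue) \<le> 0"
  shows "emeasure lebesgue {x. f x < 0} * emeasure lebesgue {\<xi>. convolution f \<psi> \<xi> < 0}
           \<ge> ennreal (1 / (16 * a^2 * b^2 * c^4))
         \<and> (\<forall>r1 r2. r1 > 0 \<longrightarrow> r2 > 0 \<longrightarrow> (\<forall>x. norm x \<ge> r1 \<longrightarrow> f x \<ge> 0) \<longrightarrow>
           (\<forall>\<xi>. norm \<xi> \<ge> r2 \<longrightarrow> convolution f \<psi> \<xi> \<ge> 0) \<longrightarrow>
           r1 * r2 \<ge> (16 * a^2 * b^2 * c^4 * (measure lebesgue (cball (0::'a) 1))^2) powr (- 1 / real DIM('a)))"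
proof -
  note f = PW_lborel[OF f_PW]
  have f_meas[measurable]: "f \<in> borel_measurable borel"
    using f(1) by (rule borel_measurable_continuous_onI)
  obtain p where p_meas[measurable]: "p \<in> borel_measurable borel" and AE: "AE x in lborel. \<psi> x = p x"
    and p: "integrable lborel p" and b: "b = (\<integral>x. \<bar>p x\<bar> \<partial>lborel)"
    using borel_representative[OF psi_L1] b_def by metis
  have FT_\<psi>: "fourier_transform \<psi> \<xi> = fourier p \<xi>" for \<xi>
    by (rule fourier_transform_eq_fourier[OF p_meas AE])
  have conv: "convolution f \<psi> = conv f p"
    by (intro ext convolution_eq_conv[OF f_meas p_meas AE])
  have [measurable]: "conv f p \<in> borel_measurable borel"
    using integrable_conv[OF f_meas p_meas f(2) p] by (simp add: borel_measurable_integrable)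
  have bc: "1 \<le> b * c"
    using c_bound[of 0] mult_left_mono[OF norm_fourier_le[of p 0] less_imp_le[OF c_pos]]
    by (simp add: FT_\<psi> b mult.commute)
  have "ennreal (1 / (16 * a\<^sup>2 * c\<^sup>2)) \<le> emeasure lborel {x. f x < 0} * emeasure lborel {x. conv f p x < 0}"
    using f_int psi_hat0 c_bound
    by (intro emeasure_negative_sets_product_ge[OF f f_nonzero _ p_meas p AE_abs_le_Linf_norm[OF psi_Linf AE, folded a_def]])
      (simp_all add: integral_completion FT_\<psi> fourier_0)
  then have bound: "ennreal (1 / (16 * a\<^sup>2 * b\<^sup>2 * c ^ 4)) \<le> emeasure lborel {x. f x < 0} * emeasure lborel {x. conv f p x < 0}"
    by (rule order_trans[OF ennreal_leI[OF uncertainty_constant_le[OF c_pos bc]]])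
  moreover have "{x. h x < 0} \<subseteq> ball 0 r" if "\<forall>x. norm x \<ge> r \<longrightarrow> 0 \<le> h x" for r and h :: "'a \<Rightarrow> real"
    using that by (auto simp: not_le[symmetric])
  ultimately show ?thesis
    using radius_product_ge[OF bound] by (simp add: conv)
qed

end
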